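(* Let $K$ be a compact Hausdorff space. Then $n_L(C(K))=1$, in both the real and the complex case.
   Context: $C(K)$ is the Banach space of continuous scalar-valued functions on $K$ with the supremum norm. For a Banach space $X$: $\mathrm{Lip}_0(X)$ is the set of Lipschitz maps $T:X\to X$ with $T(0)=0$, with $\|T\|_L=\sup\{\|Tx-Ty\|/\|x-y\|: x\neq y\}$; $D(x)=\{x^*\in X^*: x^*(x)=\|x^*\|\|x\|=\|x\|^2\}$; $\omega(T)=\sup\{|f(Tx-Ty)|/\|x-y\|^2: x\neq y,\ f\in D(x-y)\}$; $n_L(X)=\inf\{\omega(T): T\in\mathrm{Lip}_0(X),\ \|T\|_L=1\}$. *)

theory Defs
  imports "HOL-Analysis.Analysis"
begin

text \<open>K is a type 'a (with its topology), the scalars form a type 'k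
(instantiated with real and complex).\<close>

definition CK :: "('a::topological_space \<Rightarrow> 'k::real_normed_field) set" where
  "CK = {f. continuous_on UNIV f}"

definition supnorm :: "('a \<Rightarrow> 'k::real_normed_field) \<Rightarrow> real" where
  "supnorm f = (SUP t. norm (f t))"

text \<open>Dual space: 'k-linear bounded functionals on C(K) (only their values on C(K) matter).\<close>

definition dualCK :: "(('a::topological_space \<Rightarrow> 'k::real_normed_field) \<Rightarrow> 'k) set" where
  "dualCK = {\<phi>. (\<forall>f\<in>CK. \<forall>g\<in>CK. \<phi> (\<lambda>t. f t + g t) = \<phi> f + \<phi> g)
              \<and> (\<forall>f\<in>CK. \<forall>c. \<phi> (\<lambda>t. c * f t) = c * \<phi> f)
              \<and> (\<exists>B. \<forall>f\<in>CK. norm (\<phi> f) \<le> B * supnorm f)}"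

definition dualnorm :: "(('a::topological_space \<Rightarrow> 'k::real_normed_field) \<Rightarrow> 'k) \<Rightarrow> real" where
  "dualnorm \<phi> = (SUP f\<in>{f\<in>CK. supnorm f \<le> 1}. norm (\<phi> f))"

definition Dset :: "('a::topological_space \<Rightarrow> 'k::real_normed_field) \<Rightarrow> (('a \<Rightarrow> 'k) \<Rightarrow> 'k) set" where
  "Dset x = {\<phi>\<in>dualCK. \<phi> x = of_real (dualnorm \<phi> * supnorm x)
                        \<and> dualnorm \<phi> * supnorm x = (supnorm x)\<^sup>2}"

definition Lip0 :: "(('a::topological_space \<Rightarrow> 'k::real_normed_field) \<Rightarrow> ('a \<Rightarrow> 'k)) set" where
  "Lip0 = {T. (\<forall>x\<in>CK. T x \<in> CK) \<and> T (\<lambda>t. 0) = (\<lambda>t. 0)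
            \<and> (\<exists>L. \<forall>x\<in>CK. \<forall>y\<in>CK. supnorm (\<lambda>t. T x t - T y t) \<le> L * supnorm (\<lambda>t. x t - y t))}"

definition lipnorm :: "(('a::topological_space \<Rightarrow> 'k::real_normed_field) \<Rightarrow> ('a \<Rightarrow> 'k)) \<Rightarrow> real" where
  "lipnorm T = (SUP (x, y)\<in>{(x, y). x \<in> CK \<and> y \<in> CK \<and> x \<noteq> y}.
                  supnorm (\<lambda>t. T x t - T y t) / supnorm (\<lambda>t. x t - y t))"

definition omegaL :: "(('a::topological_space \<Rightarrow> 'k::real_normed_field) \<Rightarrow> ('a \<Rightarrow> 'k)) \<Rightarrow> real" where
  "omegaL T = (SUP (x, y, \<phi>)\<in>{(x, y, \<phi>). x \<in> CK \<and> y \<in> CK \<and> x \<noteq> y \<and> \<phi> \<in> Dset (\<lambda>t. x t - y t)}.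
                  norm (\<phi> (\<lambda>t. T x t - T y t)) / (supnorm (\<lambda>t. x t - y t))\<^sup>2)"

text \<open>The Lipschitz numerical index n_L(C(K)); the type argument selects K and the scalars.\<close>

definition nL :: "('a::topological_space \<Rightarrow> 'k::real_normed_field) itself \<Rightarrow> real" where
  "nL _ = Inf {omegaL T | T :: ('a \<Rightarrow> 'k) \<Rightarrow> ('a \<Rightarrow> 'k). T \<in> Lip0 \<and> lipnorm T = 1}"

end

theory Submission
  imports Defs
begin

(* The Lipschitz numerical index of C(K) is 1 because, for every Lipschitz map T on C(K)
   with T(0) = 0, the Lipschitz numerical radius equals the Lipschitz norm:
   omegaL T = lipnorm T.  The inequality omegaL T <= lipnorm T holds in any Banach space,
   since |phi(Tx - Ty)| <= ||phi|| ||Tx - Ty|| <= ||x - y||^2 lipnorm T for phi in D(x - y).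
   For the converse it suffices to show |(Tu - Tv)(s)| <= omegaL T ||u - v|| at every point s.
   If |u - v| peaks at s, a scaled evaluation at s lies in D(u - v) and gives this directly.
   Otherwise u - v splits, up to an arbitrarily small remainder rho, into two functions p, q
   both peaking at s with ||p|| + ||q|| = ||u - v||; walking from v to u through v + rho and
   v + rho + q, the triangle inequality bounds the increment at s by
   lipnorm T ||rho|| + omegaL T (||q|| + ||p||).  The splitting is built from a bump at s
   (defined through the continuity of u - v itself, so no separation axiom is needed) and
   radial truncations.  Compactness of K only serves to make the supremum norm finite. *)

lemma CK_diff: "f \<in> CK \<Longrightarrow> g \<in> CK \<Longrightarrow> (\<lambda>t. f t - g t) \<in> CK"
  unfolding CK_def by (auto intro!: continuous_intros)

lemma CK_add: "f \<in> CK \<Longrightarrow> g \<in> CK \<Longrightarrow> (\<lambda>t. f t + g t) \<in> CK"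
  unfolding CK_def by (auto intro!: continuous_intros)

lemma CK_scale: "f \<in> CK \<Longrightarrow> (\<lambda>t. c * f t) \<in> CK"
  unfolding CK_def by (auto intro!: continuous_intros)

lemma CK_const: "(\<lambda>t. c) \<in> CK"
  unfolding CK_def by (auto intro!: continuous_intros)

lemma supnorm_le:
  assumes "\<And>t. norm (f t) \<le> c"
  shows "supnorm f \<le> c"
  unfolding supnorm_def by (rule cSUP_least) (auto intro: assms)

lemma supnorm_const: "supnorm (\<lambda>t. c) = norm c"
  unfolding supnorm_def by simp

definition eval_at :: "'k \<Rightarrow> 'a \<Rightarrow> ('a \<Rightarrow> 'k::real_normed_field) \<Rightarrow> 'k" where
  "eval_at c s f = c * f s"

definition truncate :: "real \<Rightarrow> 'k::real_normed_field \<Rightarrow> 'k" where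
  "truncate \<alpha> z = of_real (\<alpha> / max \<alpha> (norm z)) * z"

lemma norm_truncate_le:
  assumes "0 < \<alpha>" shows "norm (truncate \<alpha> z) \<le> \<alpha>"
proof -
  have "norm (truncate \<alpha> z) = \<alpha> / max \<alpha> (norm z) * norm z"
    using assms unfolding truncate_def norm_mult norm_of_real by simp
  also have "\<dots> \<le> \<alpha>"
    using assms by (cases "norm z \<le> \<alpha>") (auto simp: max_def field_simps)
  finally show ?thesis .
qed

lemma truncate_id: "0 < \<alpha> \<Longrightarrow> norm z \<le> \<alpha> \<Longrightarrow> truncate \<alpha> z = z"
  by (simp add: truncate_def max_def)

lemma norm_sub_truncate_le:
  assumes "0 < \<alpha>" "0 \<le> e" "norm z \<le> \<alpha> + e"
  shows "norm (z - truncate \<alpha> z) \<le> e"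
proof (cases "norm z \<le> \<alpha>")
  case True
  then show ?thesis using assms by (simp add: truncate_id)
next
  case False
  then have nz: "z \<noteq> 0" using assms(1) by auto
  with False have "z - truncate \<alpha> z = of_real (1 - \<alpha> / norm z) * z"
    by (simp add: truncate_def max_def algebra_simps)
  moreover have "0 \<le> 1 - \<alpha> / norm z" using False assms(1) by (simp add: divide_le_eq)
  ultimately have "norm (z - truncate \<alpha> z) = (1 - \<alpha> / norm z) * norm z"
    by (simp only: norm_mult norm_of_real abs_of_nonneg)
  also have "\<dots> = norm z - \<alpha>" using nz by (simp add: field_simps)
  finally show ?thesis using assms by simp
qed

lemma continuous_on_truncate:
  "0 < \<alpha> \<Longrightarrow> continuous_on UNIV f \<Longrightarrow> continuous_on UNIV (\<lambda>t. truncate \<alpha> (f t))"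
  unfolding truncate_def by (auto intro!: continuous_intros)

lemma polar_form:
  fixes z :: "'k::real_normed_field"
  obtains u where "norm u = 1" "z = of_real (norm z) * u"
proof (cases "z = 0")
  case True
  then show ?thesis by (intro that[of 1]) simp_all
next
  case False
  then show ?thesis by (intro that[of "z / of_real (norm z)"]) (simp_all add: norm_divide)
qed

text \<open>Pointwise estimate for the bump-modified scaling used in the peak splitting:
  away from the bump (g = 0) it is a pure contraction by \<theta>, near it (g > 0, so u is close
  to v) it is a convex combination of \<theta> v and a, up to the error \<theta> |u - v|.\<close>

lemma bump_mixture_norm_le:
  fixes u v a :: "'k::real_normed_field"
  assumes u: "norm u \<le> r" and v: "norm v \<le> r" and \<theta>: "0 \<le> \<theta>" "\<theta> \<le> 1"
    and a: "norm a \<le> \<theta> * r" and g: "0 \<le> g" "g \<le> 1"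
    and near: "g \<noteq> 0 \<Longrightarrow> norm (u - v) \<le> \<eta>" and \<eta>: "0 \<le> \<eta>"
  shows "norm (of_real \<theta> * u + of_real g * (a - of_real \<theta> * v)) \<le> \<theta> * r + \<eta>"
proof (cases "g = 0")
  case True
  have "\<theta> * norm u \<le> \<theta> * r" using u \<theta> by (simp add: mult_left_mono)
  then show ?thesis using True \<theta> \<eta> by (simp add: norm_mult)
next
  case False
  define h where "h = 1 - g"
  have h: "0 \<le> h" using g by (simp add: h_def)
  have "of_real \<theta> * u + of_real g * (a - of_real \<theta> * v)
      = of_real \<theta> * (u - v) + (of_real h * (of_real \<theta> * v) + of_real g * a)"
    by (simp add: h_def algebra_simps)
  also have "norm \<dots> \<le> norm (of_real \<theta> * (u - v))
      + (norm (of_real h * (of_real \<theta> * v)) + norm (of_real g * a))"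
    by (rule order_trans[OF norm_triangle_ineq add_left_mono[OF norm_triangle_ineq]])
  also have "\<dots> = \<theta> * norm (u - v) + (h * (\<theta> * norm v) + g * norm a)"
    using \<theta> g h by (simp add: norm_mult)
  also have "\<dots> \<le> 1 * \<eta> + (h * (\<theta> * r) + g * (\<theta> * r))"
    using \<theta> g h near[OF False] u v a
    by (intro add_mono mult_mono mult_left_mono) auto
  also have "\<dots> = \<theta> * r + \<eta>" by (simp add: h_def algebra_simps)
  finally show ?thesis .
qed

lemma Lip0_CK: "T \<in> Lip0 \<Longrightarrow> x \<in> CK \<Longrightarrow> T x \<in> CK"
  unfolding Lip0_def by blast

lemma id_in_Lip0: "id \<in> Lip0"
  unfolding Lip0_def by (intro CollectI conjI ballI exI[of _ 1]) simp_all

lemma pairs_nonempty: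
  "{(x :: 'a::topological_space \<Rightarrow> 'k::real_normed_field, y). x \<in> CK \<and> y \<in> CK \<and> x \<noteq> y} \<noteq> {}"
proof -
  have "((\<lambda>t::'a. 1::'k), (\<lambda>t. 0)) \<in> {(x, y). x \<in> CK \<and> y \<in> CK \<and> x \<noteq> y}"
    using CK_const by (auto dest: fun_cong)
  then show ?thesis by blast
qed

text \<open>From here on K is compact, so continuous functions are bounded and supnorm is finite.\<close>

context
  assumes K: "compact (UNIV :: 'a::topological_space set)"
begin

lemma CK_bdd_above:
  fixes f :: "'a \<Rightarrow> 'k::real_normed_field"
  assumes "f \<in> CK"
  shows "bdd_above (range (\<lambda>t. norm (f t)))"
proof -
  have "compact (range f)" using assms K compact_continuous_image unfolding CK_def by blast
  then obtain B where "\<forall>z\<in>range f. norm z \<le> B" using compact_imp_bounded bounded_iff by metis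
  then show ?thesis by (auto intro!: bdd_aboveI2)
qed

lemma norm_le_supnorm:
  fixes f :: "'a \<Rightarrow> 'k::real_normed_field"
  assumes "f \<in> CK"
  shows "norm (f t) \<le> supnorm f"
  unfolding supnorm_def by (rule cSUP_upper[OF _ CK_bdd_above[OF assms]]) simp

lemma supnorm_nonneg:
  fixes f :: "'a \<Rightarrow> 'k::real_normed_field"
  shows "f \<in> CK \<Longrightarrow> 0 \<le> supnorm f"
  using norm_le_supnorm norm_ge_zero order_trans by blast

lemma supnorm_diff_pos:
  fixes x y :: "'a \<Rightarrow> 'k::real_normed_field"
  assumes "x \<in> CK" "y \<in> CK" "x \<noteq> y"
  shows "0 < supnorm (\<lambda>t. x t - y t)"
proof -
  obtain t where "x t \<noteq> y t" using assms(3) by auto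
  then have "0 < norm (x t - y t)" by simp
  also have "\<dots> \<le> supnorm (\<lambda>t. x t - y t)" using norm_le_supnorm CK_diff assms by blast
  finally show ?thesis .
qed

lemma lipnorm_bound:
  fixes T :: "('a \<Rightarrow> 'k::real_normed_field) \<Rightarrow> ('a \<Rightarrow> 'k)"
  assumes T: "T \<in> Lip0" and u: "u \<in> CK" and v: "v \<in> CK"
  shows "supnorm (\<lambda>t. T u t - T v t) \<le> lipnorm T * supnorm (\<lambda>t. u t - v t)"
proof (cases "u = v")
  case True
  then show ?thesis by (simp add: supnorm_const)
next
  case False
  obtain L where L: "\<forall>x\<in>CK. \<forall>y\<in>CK. supnorm (\<lambda>t. T x t - T y t) \<le> L * supnorm (\<lambda>t. x t - y t)"
    using T unfolding Lip0_def by blast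
  have bdd: "bdd_above ((\<lambda>(x, y). supnorm (\<lambda>t. T x t - T y t) / supnorm (\<lambda>t. x t - y t))
      ` {(x, y). x \<in> CK \<and> y \<in> CK \<and> x \<noteq> y})"
  proof (rule bdd_aboveI2)
    fix p :: "('a \<Rightarrow> 'k) \<times> ('a \<Rightarrow> 'k)"
    assume "p \<in> {(x, y). x \<in> CK \<and> y \<in> CK \<and> x \<noteq> y}"
    then obtain x y where "p = (x, y)" "x \<in> CK" "y \<in> CK" "x \<noteq> y" by blast
    then show "(case p of (x, y) \<Rightarrow> supnorm (\<lambda>t. T x t - T y t) / supnorm (\<lambda>t. x t - y t)) \<le> L"
      using L supnorm_diff_pos[of x y] by (simp add: pos_divide_le_eq)
  qed
  have "supnorm (\<lambda>t. T u t - T v t) / supnorm (\<lambda>t. u t - v t) \<le> lipnorm T"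
    unfolding lipnorm_def
    by (rule cSUP_upper[OF _ bdd, of "(u, v)", simplified]) (use u v False in auto)
  then show ?thesis
    using supnorm_diff_pos[OF u v False] by (simp add: divide_le_eq mult.commute)
qed

lemma dualnorm_bound:
  fixes \<phi> :: "('a \<Rightarrow> 'k::real_normed_field) \<Rightarrow> 'k" and f :: "'a \<Rightarrow> 'k"
  assumes \<phi>: "\<phi> \<in> dualCK" and f: "f \<in> CK"
  shows "norm (\<phi> f) \<le> dualnorm \<phi> * supnorm f"
proof -
  have hom: "\<And>f c. f \<in> CK \<Longrightarrow> \<phi> (\<lambda>t. c * f t) = c * \<phi> f"
    using \<phi> unfolding dualCK_def by blast
  obtain B where B: "\<forall>f\<in>CK. norm (\<phi> f) \<le> B * supnorm f" using \<phi> unfolding dualCK_def by blast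
  have bdd: "bdd_above ((\<lambda>f. norm (\<phi> f)) ` {f \<in> CK. supnorm f \<le> 1})"
  proof (rule bdd_aboveI2)
    fix f :: "'a \<Rightarrow> 'k" assume f: "f \<in> {f \<in> CK. supnorm f \<le> 1}"
    have "norm (\<phi> f) \<le> B * supnorm f" using B f by auto
    also have "\<dots> \<le> \<bar>B\<bar> * 1"
      using f supnorm_nonneg[of f] by (intro mult_mono) auto
    finally show "norm (\<phi> f) \<le> \<bar>B\<bar>" by simp
  qed
  show ?thesis
  proof (cases "supnorm f = 0")
    case True
    then have "f = (\<lambda>t. 0 * f t)" using norm_le_supnorm[OF f] by fastforce
    then have "\<phi> f = 0" using hom[OF f, of 0] by simp
    then show ?thesis using True by simp
  next
    case False
    define c where "c = supnorm f"
    have c: "0 < c" using False supnorm_nonneg[OF f] c_def by linarith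
    define g where "g = (\<lambda>t. of_real (1 / c) * f t)"
    have "g \<in> CK" unfolding g_def using f by (rule CK_scale)
    moreover have "supnorm g \<le> 1"
      using norm_le_supnorm[OF f] c
      by (intro supnorm_le) (simp add: g_def c_def norm_divide divide_le_eq)
    ultimately have "norm (\<phi> g) \<le> dualnorm \<phi>"
      unfolding dualnorm_def by (intro cSUP_upper[OF _ bdd]) auto
    moreover have "\<phi> g = of_real (1 / c) * \<phi> f" unfolding g_def using hom[OF f] .
    ultimately have "norm (\<phi> f) / c \<le> dualnorm \<phi>" using c by (simp add: norm_divide)
    then show ?thesis using c by (simp add: c_def divide_le_eq mult.commute)
  qed
qed

lemma eval_at_dualCK: "eval_at c s \<in> (dualCK :: (('a \<Rightarrow> 'k::real_normed_field) \<Rightarrow> 'k) set)"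
  unfolding dualCK_def eval_at_def
proof (intro CollectI conjI ballI allI)
  show "\<exists>B. \<forall>f::'a \<Rightarrow> 'k\<in>CK. norm (c * f s) \<le> B * supnorm f"
    by (intro exI[of _ "norm c"]) (auto simp: norm_mult intro!: mult_left_mono norm_le_supnorm)
qed (auto simp: algebra_simps)

lemma dualnorm_eval_at: "dualnorm (eval_at c s :: ('a \<Rightarrow> 'k::real_normed_field) \<Rightarrow> 'k) = norm c"
proof -
  define B where "B = {f::'a \<Rightarrow> 'k \<in> CK. supnorm f \<le> 1}"
  have le: "norm (eval_at c s f) \<le> norm c" if "f \<in> B" for f
  proof -
    have "norm (f s) \<le> 1" using that norm_le_supnorm[of f s] by (auto simp: B_def)
    then show ?thesis by (simp add: eval_at_def norm_mult mult_left_le)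
  qed
  have one: "(\<lambda>t. 1) \<in> B" by (simp add: B_def CK_const supnorm_const)
  have "(SUP f\<in>B. norm (eval_at c s f)) = norm c"
  proof (rule antisym)
    show "(SUP f\<in>B. norm (eval_at c s f)) \<le> norm c" using one le by (intro cSUP_least) auto
    have "norm (eval_at c s (\<lambda>t. 1)) \<le> (SUP f\<in>B. norm (eval_at c s f))"
      using le by (intro cSUP_upper[OF one] bdd_aboveI2) auto
    then show "norm c \<le> (SUP f\<in>B. norm (eval_at c s f))" by (simp add: eval_at_def)
  qed
  then show ?thesis unfolding dualnorm_def B_def .
qed

lemma eval_at_peak_in_Dset:
  fixes D :: "'a \<Rightarrow> 'k::real_normed_field"
  assumes D: "D \<in> CK" and peak: "norm (D s) = supnorm D"
  shows "eval_at (of_real ((supnorm D)\<^sup>2) / D s) s \<in> Dset D"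
proof -
  define c where "c = (of_real ((supnorm D)\<^sup>2) / D s :: 'k)"
  have "norm c = supnorm D \<and> c * D s = of_real ((supnorm D)\<^sup>2)"
  proof (cases "D s = 0")
    case True
    then show ?thesis using peak by (simp add: c_def)
  next
    case False
    then show ?thesis
      using peak supnorm_nonneg[OF D] by (simp add: c_def norm_divide norm_mult power2_eq_square)
  qed
  then show ?thesis
    unfolding Dset_def c_def[symmetric]
    by (simp add: eval_at_dualCK dualnorm_eval_at eval_at_def power2_eq_square)
qed

lemma omegaL_index_nonempty:
  "{(x :: 'a \<Rightarrow> 'k::real_normed_field, y, \<phi>). x \<in> CK \<and> y \<in> CK \<and> x \<noteq> y
     \<and> \<phi> \<in> Dset (\<lambda>t. x t - y t)} \<noteq> {}"
proof -
  define D :: "'a \<Rightarrow> 'k" where "D = (\<lambda>t. 1 - 0)"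
  define \<phi> where "\<phi> = eval_at (of_real ((supnorm D)\<^sup>2) / D undefined) (undefined :: 'a)"
  have "\<phi> \<in> Dset D"
    unfolding \<phi>_def by (rule eval_at_peak_in_Dset) (simp_all add: D_def CK_const supnorm_const)
  then have "((\<lambda>t. 1), (\<lambda>t. 0), \<phi>)
      \<in> {(x, y, \<phi>). x \<in> CK \<and> y \<in> CK \<and> x \<noteq> y \<and> \<phi> \<in> Dset (\<lambda>t. x t - y t)}"
    using CK_const by (auto simp: D_def dest: fun_cong)
  then show ?thesis by blast
qed

lemma omegaL_quotient_le_lipnorm:
  fixes T :: "('a \<Rightarrow> 'k::real_normed_field) \<Rightarrow> ('a \<Rightarrow> 'k)"
  assumes T: "T \<in> Lip0" and x: "x \<in> CK" and y: "y \<in> CK" and xy: "x \<noteq> y"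
    and \<phi>: "\<phi> \<in> Dset (\<lambda>t. x t - y t)"
  shows "norm (\<phi> (\<lambda>t. T x t - T y t)) / (supnorm (\<lambda>t. x t - y t))\<^sup>2 \<le> lipnorm T"
proof -
  define N where "N = supnorm (\<lambda>t. x t - y t)"
  have N: "0 < N" using supnorm_diff_pos[OF x y xy] by (simp add: N_def)
  have \<phi>_dual: "\<phi> \<in> dualCK" and "dualnorm \<phi> * N = N\<^sup>2" using \<phi> by (auto simp: Dset_def N_def)
  then have norm_\<phi>: "dualnorm \<phi> = N" using N by (simp add: power2_eq_square)
  have "norm (\<phi> (\<lambda>t. T x t - T y t)) \<le> N * supnorm (\<lambda>t. T x t - T y t)"
    using dualnorm_bound[OF \<phi>_dual CK_diff[OF Lip0_CK[OF T x] Lip0_CK[OF T y]]] norm_\<phi> by simp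
  also have "\<dots> \<le> N * (lipnorm T * N)"
    using lipnorm_bound[OF T x y] N by (simp add: N_def)
  finally show ?thesis using N by (simp add: N_def power2_eq_square divide_le_eq mult_ac)
qed

lemma omegaL_bdd_above:
  fixes T :: "('a \<Rightarrow> 'k::real_normed_field) \<Rightarrow> ('a \<Rightarrow> 'k)"
  assumes "T \<in> Lip0"
  shows "bdd_above ((\<lambda>(x, y, \<phi>). norm (\<phi> (\<lambda>t. T x t - T y t)) / (supnorm (\<lambda>t. x t - y t))\<^sup>2) `
     {(x, y, \<phi>). x \<in> CK \<and> y \<in> CK \<and> x \<noteq> y \<and> \<phi> \<in> Dset (\<lambda>t. x t - y t)})"
  by (rule bdd_aboveI2[where M = "lipnorm T"]) (auto intro: omegaL_quotient_le_lipnorm[OF assms])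

lemma omegaL_le_lipnorm:
  fixes T :: "('a \<Rightarrow> 'k::real_normed_field) \<Rightarrow> ('a \<Rightarrow> 'k)"
  assumes "T \<in> Lip0"
  shows "omegaL T \<le> lipnorm T"
  unfolding omegaL_def
  by (rule cSUP_least[OF omegaL_index_nonempty]) (auto intro: omegaL_quotient_le_lipnorm[OF assms])

text \<open>At a point where u - v attains its norm, the increment of T is controlled by omegaL T:
  the scaled evaluation at that point is a witness in D(u - v).\<close>

lemma increment_at_peak_le:
  fixes T :: "('a \<Rightarrow> 'k::real_normed_field) \<Rightarrow> ('a \<Rightarrow> 'k)"
  assumes T: "T \<in> Lip0" and u: "u \<in> CK" and v: "v \<in> CK"
    and peak: "norm (u s - v s) = supnorm (\<lambda>t. u t - v t)"
  shows "norm (T u s - T v s) \<le> omegaL T * supnorm (\<lambda>t. u t - v t)"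
proof (cases "u = v")
  case True
  then show ?thesis by (simp add: supnorm_const)
next
  case False
  define N where "N = supnorm (\<lambda>t. u t - v t)"
  define c where "c = (of_real (N\<^sup>2) / (u s - v s) :: 'k)"
  have N: "0 < N" using supnorm_diff_pos[OF u v False] by (simp add: N_def)
  have in_D: "eval_at c s \<in> Dset (\<lambda>t. u t - v t)"
    using eval_at_peak_in_Dset[OF CK_diff[OF u v], of s] peak by (simp add: c_def N_def)
  have norm_c: "norm c = N"
    using peak N by (simp add: c_def N_def norm_divide norm_mult power2_eq_square)
  have "(u, v, eval_at c s)
      \<in> {(x, y, \<phi>). x \<in> CK \<and> y \<in> CK \<and> x \<noteq> y \<and> \<phi> \<in> Dset (\<lambda>t. x t - y t)}"
    using u v False in_D by simp
  then have "(\<lambda>(x, y, \<phi>). norm (\<phi> (\<lambda>t. T x t - T y t)) / (supnorm (\<lambda>t. x t - y t))\<^sup>2)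
      (u, v, eval_at c s) \<le> omegaL T"
    unfolding omegaL_def by (rule cSUP_upper[OF _ omegaL_bdd_above[OF T]])
  then have "norm (T u s - T v s) / N \<le> omegaL T"
    using N by (simp add: N_def[symmetric] eval_at_def norm_mult norm_c power2_eq_square)
  then show ?thesis using N by (simp add: N_def divide_le_eq mult.commute)
qed

text \<open>The bump is built from the continuity of d, so no separation axiom
  on K is needed.\<close>

lemma bump_interpolation:
  fixes d :: "'a \<Rightarrow> 'k::real_normed_field"
  assumes d: "d \<in> CK" and \<eta>: "0 < \<eta>" and \<theta>: "0 \<le> \<theta>" "\<theta> \<le> 1"
    and a: "norm a \<le> \<theta> * supnorm d" "norm (d s - a) \<le> (1 - \<theta>) * supnorm d"
  obtains p0 where "p0 \<in> CK" "p0 s = a"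
    "\<And>t. norm (p0 t) \<le> \<theta> * supnorm d + \<eta>" "\<And>t. norm (d t - p0 t) \<le> (1 - \<theta>) * supnorm d + \<eta>"
proof -
  define g where "g = (\<lambda>t. max 0 (1 - norm (d t - d s) / \<eta>))"
  have g_far: "g t = 0" if "\<eta> < norm (d t - d s)" for t
  proof -
    have "1 < norm (d t - d s) / \<eta>" using that \<eta> by simp
    then show ?thesis by (simp add: g_def)
  qed
  have g: "0 \<le> g t" "g t \<le> 1" "g t \<noteq> 0 \<Longrightarrow> norm (d t - d s) \<le> \<eta>" for t
    using \<eta> not_le g_far by (fastforce simp: g_def)+
  define p0 where "p0 = (\<lambda>t. of_real \<theta> * d t + of_real (g t) * (a - of_real \<theta> * d s))"
  have d_le: "norm (d t) \<le> supnorm d" for t using norm_le_supnorm[OF d] .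
  show ?thesis
  proof (rule that)
    show "p0 \<in> CK" using d \<eta> unfolding p0_def g_def CK_def by (auto intro!: continuous_intros)
    show "p0 s = a" by (simp add: p0_def g_def)
    show "norm (p0 t) \<le> \<theta> * supnorm d + \<eta>" for t
      unfolding p0_def using d_le \<theta> a g \<eta> by (intro bump_mixture_norm_le) auto
    show "norm (d t - p0 t) \<le> (1 - \<theta>) * supnorm d + \<eta>" for t
    proof -
      have "d t - p0 t
          = of_real (1 - \<theta>) * d t + of_real (g t) * ((d s - a) - of_real (1 - \<theta>) * d s)"
        by (simp add: p0_def algebra_simps)
      also have "norm \<dots> \<le> (1 - \<theta>) * supnorm d + \<eta>"
        using d_le \<theta> a g \<eta> by (intro bump_mixture_norm_le) auto
      finally show ?thesis .
    qed
  qed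
qed

text \<open>Interpolate the point a of modulus (r + |d s|)/2 in the direction of d s, then
  truncate the interpolant and the rest to their prescribed radii.\<close>

lemma peak_splitting:
  fixes d :: "'a \<Rightarrow> 'k::real_normed_field"
  assumes d: "d \<in> CK" and below: "norm (d s) < supnorm d" and \<eta>: "0 < \<eta>"
  obtains p q \<rho> where "p \<in> CK" "q \<in> CK" "\<rho> \<in> CK" "d = (\<lambda>t. \<rho> t + q t + p t)"
    "norm (p s) = supnorm p" "norm (q s) = supnorm q" "supnorm p + supnorm q = supnorm d"
    "supnorm \<rho> \<le> 2 * \<eta>"
proof -
  define r where "r = supnorm d"
  define \<alpha> where "\<alpha> = (r + norm (d s)) / 2"
  define \<beta> where "\<beta> = (r - norm (d s)) / 2"
  have "0 < r" unfolding r_def using le_less_trans[OF norm_ge_zero below] .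
  then have \<alpha>: "0 < \<alpha>" unfolding \<alpha>_def by (simp add: add_pos_nonneg)
  have \<beta>: "0 < \<beta>" unfolding \<beta>_def r_def using below by simp
  have \<theta>: "0 \<le> \<alpha> / r" "\<alpha> / r \<le> 1" "\<alpha> / r * r = \<alpha>" "(1 - \<alpha> / r) * r = \<beta>"
    using \<alpha> \<beta> by (auto simp: \<alpha>_def \<beta>_def field_simps)
  obtain u where u: "norm u = 1" "d s = of_real (norm (d s)) * u" by (rule polar_form)
  define a where "a = of_real \<alpha> * u"
  have "d s - a = of_real (norm (d s) - \<alpha>) * u" using u(2) by (simp add: a_def algebra_simps)
  moreover have "norm (d s) - \<alpha> = - \<beta>" by (simp add: \<alpha>_def \<beta>_def field_simps)
  ultimately have a: "norm a = \<alpha>" "norm (d s - a) = \<beta>"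
    using u(1) \<alpha> \<beta> by (simp_all add: a_def norm_mult)
  obtain p0 where p0: "p0 \<in> CK" "p0 s = a"
    "\<And>t. norm (p0 t) \<le> \<alpha> + \<eta>" "\<And>t. norm (d t - p0 t) \<le> \<beta> + \<eta>"
    by (rule bump_interpolation[OF d \<eta> \<theta>(1,2), of a s]) (use a \<theta> in \<open>simp_all add: r_def\<close>)
  define p where "p = (\<lambda>t. truncate \<alpha> (p0 t))"
  define q where "q = (\<lambda>t. truncate \<beta> (d t - p t))"
  define \<rho> where "\<rho> = (\<lambda>t. d t - p t - q t)"
  have pCK: "p \<in> CK" using p0(1) continuous_on_truncate[OF \<alpha>] by (simp add: p_def CK_def)
  have qCK: "q \<in> CK"
    using CK_diff[OF d pCK] continuous_on_truncate[OF \<beta>] by (simp add: q_def CK_def)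
  have p_s: "p s = a" and q_s: "q s = d s - a"
    using a by (simp_all add: p_def q_def p0(2) truncate_id \<alpha> \<beta>)
  have d_sub_p: "norm (d t - p t) \<le> \<beta> + 2 * \<eta>" for t
  proof -
    have "norm (p0 t - p t) \<le> \<eta>"
      unfolding p_def using norm_sub_truncate_le[OF \<alpha> _ p0(3)] \<eta> by simp
    then show ?thesis
      using p0(4)[of t] norm_triangle_ineq[of "d t - p0 t" "p0 t - p t"] by simp
  qed
  have sup_p: "supnorm p = \<alpha>"
  proof (rule antisym)
    show "supnorm p \<le> \<alpha>" unfolding p_def by (intro supnorm_le norm_truncate_le \<alpha>)
    show "\<alpha> \<le> supnorm p" using norm_le_supnorm[OF pCK, of s] p_s a by simp
  qed
  have sup_q: "supnorm q = \<beta>"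
  proof (rule antisym)
    show "supnorm q \<le> \<beta>" unfolding q_def by (intro supnorm_le norm_truncate_le \<beta>)
    show "\<beta> \<le> supnorm q" using norm_le_supnorm[OF qCK, of s] q_s a by simp
  qed
  have \<rho>CK: "\<rho> \<in> CK" using CK_diff[OF CK_diff[OF d pCK] qCK] by (simp add: \<rho>_def)
  show ?thesis
  proof (rule that[OF pCK qCK \<rho>CK])
    show "d = (\<lambda>t. \<rho> t + q t + p t)" by (simp add: \<rho>_def)
    show "norm (p s) = supnorm p" "norm (q s) = supnorm q"
      using p_s q_s a sup_p sup_q by simp_all
    show "supnorm p + supnorm q = supnorm d"
      by (simp add: sup_p sup_q \<alpha>_def \<beta>_def r_def field_simps)
    show "supnorm \<rho> \<le> 2 * \<eta>"
      unfolding \<rho>_def q_def using norm_sub_truncate_le[OF \<beta> _ d_sub_p] \<eta>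
      by (intro supnorm_le) simp
  qed
qed

text \<open>Walking from v to u along a splitting u - v = \<rho> + q + p whose parts q and p peak at s,
  through v + \<rho> and v + \<rho> + q: the first step costs lipnorm T |\<rho>|, the other two are
  controlled by omegaL T at the peak, and |q| + |p| = |u - v|.\<close>

lemma increment_along_splitting_le:
  fixes T :: "('a \<Rightarrow> 'k::real_normed_field) \<Rightarrow> ('a \<Rightarrow> 'k)"
  assumes T: "T \<in> Lip0" and u: "u \<in> CK" and v: "v \<in> CK"
    and pq\<rho>: "p \<in> CK" "q \<in> CK" "\<rho> \<in> CK" "(\<lambda>t. u t - v t) = (\<lambda>t. \<rho> t + q t + p t)"
    and peaks: "norm (p s) = supnorm p" "norm (q s) = supnorm q"
    and sum: "supnorm p + supnorm q = supnorm (\<lambda>t. u t - v t)"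
  shows "norm (T u s - T v s) \<le> lipnorm T * supnorm \<rho> + omegaL T * supnorm (\<lambda>t. u t - v t)"
proof -
  define v1 where "v1 = (\<lambda>t. v t + \<rho> t)"
  define v2 where "v2 = (\<lambda>t. v1 t + q t)"
  have v1: "v1 \<in> CK" and v2: "v2 \<in> CK" using CK_add v pq\<rho>(2,3) by (auto simp: v1_def v2_def)
  have steps: "(\<lambda>t. v1 t - v t) = \<rho>" "(\<lambda>t. v2 t - v1 t) = q" "(\<lambda>t. u t - v2 t) = p"
    using fun_cong[OF pq\<rho>(4)] by (auto simp: v1_def v2_def fun_eq_iff algebra_simps)
  have "norm (T u s - T v s)
      \<le> norm (T v1 s - T v s) + norm (T v2 s - T v1 s) + norm (T u s - T v2 s)"
    using norm_triangle_ineq[of "T v1 s - T v s" "T v2 s - T v1 s"]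
      norm_triangle_ineq[of "T v2 s - T v s" "T u s - T v2 s"] by simp
  also have "\<dots> \<le> lipnorm T * supnorm \<rho> + omegaL T * supnorm q + omegaL T * supnorm p"
  proof (intro add_mono)
    show "norm (T v1 s - T v s) \<le> lipnorm T * supnorm \<rho>"
      using norm_le_supnorm[OF CK_diff[OF Lip0_CK[OF T v1] Lip0_CK[OF T v]], of s]
        lipnorm_bound[OF T v1 v] steps(1) by simp
    show "norm (T v2 s - T v1 s) \<le> omegaL T * supnorm q"
      using increment_at_peak_le[OF T v2 v1, of s] steps(2) fun_cong[OF steps(2), of s] peaks(2)
      by simp
    show "norm (T u s - T v2 s) \<le> omegaL T * supnorm p"
      using increment_at_peak_le[OF T u v2, of s] steps(3) fun_cong[OF steps(3), of s] peaks(1)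
      by simp
  qed
  also have "\<dots> = lipnorm T * supnorm \<rho> + omegaL T * supnorm (\<lambda>t. u t - v t)"
    using sum by (simp add: distrib_left[symmetric] add.commute)
  finally show ?thesis .
qed

text \<open>Key estimate: omegaL T controls the increment of T at every point, not only at points
  where u - v attains its norm; away from the peak, split u - v with a remainder so small that
  its cost lipnorm T |\<rho>| is below any given e.\<close>

lemma increment_le_omegaL:
  fixes T :: "('a \<Rightarrow> 'k::real_normed_field) \<Rightarrow> ('a \<Rightarrow> 'k)"
  assumes T: "T \<in> Lip0" and u: "u \<in> CK" and v: "v \<in> CK"
  shows "norm (T u s - T v s) \<le> omegaL T * supnorm (\<lambda>t. u t - v t)"
proof -
  define d where "d = (\<lambda>t. u t - v t)"
  have d: "d \<in> CK" using CK_diff[OF u v] by (simp add: d_def)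
  consider (peak) "norm (d s) = supnorm d" | (below) "norm (d s) < supnorm d"
    using norm_le_supnorm[OF d, of s] by linarith
  then show ?thesis
  proof cases
    case peak
    then show ?thesis using increment_at_peak_le[OF T u v] by (simp add: d_def)
  next
    case below
    show ?thesis
    proof (rule field_le_epsilon)
      fix e :: real assume e: "0 < e"
      define L where "L = lipnorm T"
      define \<eta> where "\<eta> = e / (2 * (\<bar>L\<bar> + 1))"
      have \<eta>: "0 < \<eta>" using e by (simp add: \<eta>_def add_pos_nonneg)
      obtain p q \<rho> where pq\<rho>: "p \<in> CK" "q \<in> CK" "\<rho> \<in> CK" "d = (\<lambda>t. \<rho> t + q t + p t)"
          "norm (p s) = supnorm p" "norm (q s) = supnorm q" "supnorm p + supnorm q = supnorm d"
          "supnorm \<rho> \<le> 2 * \<eta>"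
        by (rule peak_splitting[OF d below \<eta>])
      have "L * supnorm \<rho> \<le> \<bar>L\<bar> * supnorm \<rho>"
        using supnorm_nonneg[OF pq\<rho>(3)] by (simp add: mult_right_mono)
      also have "\<dots> \<le> (\<bar>L\<bar> + 1) * (2 * \<eta>)"
        using pq\<rho>(8) supnorm_nonneg[OF pq\<rho>(3)] by (intro mult_mono) auto
      also have "\<dots> = e" using abs_ge_zero[of L] by (simp add: \<eta>_def field_simps)
      finally have "L * supnorm \<rho> \<le> e" .
      moreover have "norm (T u s - T v s) \<le> L * supnorm \<rho> + omegaL T * supnorm d"
        unfolding L_def d_def
        by (rule increment_along_splitting_le[OF T u v pq\<rho>(1-3)]) (use pq\<rho> in \<open>simp_all add: d_def\<close>)
      ultimately show "norm (T u s - T v s) \<le> omegaL T * supnorm (\<lambda>t. u t - v t) + e"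
        by (simp add: d_def)
    qed
  qed
qed

lemma lipnorm_le_omegaL:
  fixes T :: "('a \<Rightarrow> 'k::real_normed_field) \<Rightarrow> ('a \<Rightarrow> 'k)"
  assumes T: "T \<in> Lip0"
  shows "lipnorm T \<le> omegaL T"
  unfolding lipnorm_def
proof (rule cSUP_least[OF pairs_nonempty])
  fix p :: "('a \<Rightarrow> 'k) \<times> ('a \<Rightarrow> 'k)"
  assume "p \<in> {(x, y). x \<in> CK \<and> y \<in> CK \<and> x \<noteq> y}"
  then obtain x y where p: "p = (x, y)" "x \<in> CK" "y \<in> CK" "x \<noteq> y" by blast
  have "supnorm (\<lambda>t. T x t - T y t) \<le> omegaL T * supnorm (\<lambda>t. x t - y t)"
    using increment_le_omegaL[OF T p(2,3)] by (rule supnorm_le)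
  then show "(case p of (x, y) \<Rightarrow> supnorm (\<lambda>t. T x t - T y t) / supnorm (\<lambda>t. x t - y t))
      \<le> omegaL T"
    using p supnorm_diff_pos[OF p(2-4)] by (simp add: pos_divide_le_eq)
qed

theorem omegaL_eq_lipnorm:
  fixes T :: "('a \<Rightarrow> 'k::real_normed_field) \<Rightarrow> ('a \<Rightarrow> 'k)"
  shows "T \<in> Lip0 \<Longrightarrow> omegaL T = lipnorm T"
  by (intro antisym omegaL_le_lipnorm lipnorm_le_omegaL)

lemma lipnorm_id: "lipnorm (id :: ('a \<Rightarrow> 'k::real_normed_field) \<Rightarrow> ('a \<Rightarrow> 'k)) = 1"
proof -
  have "lipnorm (id :: ('a \<Rightarrow> 'k) \<Rightarrow> ('a \<Rightarrow> 'k))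
      = (SUP p\<in>{(x :: 'a \<Rightarrow> 'k, y). x \<in> CK \<and> y \<in> CK \<and> x \<noteq> y}. 1)"
    unfolding lipnorm_def
    by (intro SUP_cong) (auto simp: supnorm_diff_pos[THEN less_imp_neq, THEN not_sym])
  also have "\<dots> = 1" by (rule cSUP_const[OF pairs_nonempty])
  finally show ?thesis .
qed

lemma nL_eq_1: "nL TYPE('a \<Rightarrow> 'k::real_normed_field) = 1"
proof -
  have "{omegaL T | T :: ('a \<Rightarrow> 'k) \<Rightarrow> ('a \<Rightarrow> 'k). T \<in> Lip0 \<and> lipnorm T = 1} = {1}"
  proof (intro equalityI subsetI)
    fix w :: real
    assume "w \<in> {omegaL T | T :: ('a \<Rightarrow> 'k) \<Rightarrow> ('a \<Rightarrow> 'k). T \<in> Lip0 \<and> lipnorm T = 1}"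
    then show "w \<in> {1}" using omegaL_eq_lipnorm by force
  next
    fix w :: real assume "w \<in> {1}"
    moreover have "omegaL (id :: ('a \<Rightarrow> 'k) \<Rightarrow> ('a \<Rightarrow> 'k)) = 1"
      by (rule trans[OF omegaL_eq_lipnorm[OF id_in_Lip0] lipnorm_id])
    ultimately show "w \<in> {omegaL T | T :: ('a \<Rightarrow> 'k) \<Rightarrow> ('a \<Rightarrow> 'k). T \<in> Lip0 \<and> lipnorm T = 1}"
      using id_in_Lip0 lipnorm_id by (auto intro!: exI[of _ id])
  qed
  then show ?thesis by (simp add: nL_def)
qed

end

theorem proposition2p8:
  assumes "compact (UNIV :: 'a::t2_space set)"
  shows "nL TYPE('a \<Rightarrow> real) = 1 \<and> nL TYPE('a \<Rightarrow> complex) = 1"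
  using nL_eq_1[OF assms, where 'k = real] nL_eq_1[OF assms, where 'k = complex] by simp

end
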